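(* Let $(\chi_1,u_1)$ and $(\chi_2,u_2)$ be rooted realizable chirotopes. Then their join $(\chi_3,u_3)=(\chi_1,u_1)\vee(\chi_2,u_2)$ is a rooted realizable chirotope; that is, $\chi_3$ is a realizable chirotope and $u_3$ is an extreme element of $\chi_3$.
   Context: For a finite set $E$, $(E)_3$ is the set of ordered triples of distinct elements of $E$. A sign function on $E$ is a map $\chi:(E)_3\to\{-1,1\}$ with $\chi(x,y,z)=\chi(y,z,x)=\chi(z,x,y)=-\chi(z,y,x)=-\chi(y,x,z)=-\chi(x,z,y)$. A chirotope on $E$ is a sign function that moreover satisfies: (interiority) for distinct $t,x,y,z$, if $\chi(t,y,z)=\chi(x,t,z)=\chi(x,y,t)=1$ then $\chi(x,y,z)=1$; (transitivity) for distinct $s,t,x,y,z$, if $\chi(t,s,x)=\chi(t,s,y)=\chi(t,s,z)=\chi(x,y,t)=\chi(y,z,t)=1$ then $\chi(x,z,t)=1$. A chirotope is realizable if there are points $\mathfrak p_e\in\mathbb R^2$ ($e\in E$), no three collinear, such that $\chi(x,y,z)=1$ iff $\mathfrak p_x,\mathfrak p_y,\mathfrak p_z$ are in counterclockwise order. An element $x$ is extreme if there is $y\ne x$ such that $\chi(x,y,z)$ takes the same value for all $z\in E\setminus\{x,y\}$. A rooted chirotope is a pair $(\chi,u)$ with $\chi$ a chirotope on $X\cup\{u\}$ and $u\notin X$ an extreme element; it is realizable if $\chi$ is. For a rooted chirotope, $u^+$ (resp. $u^-$), the successor (resp. predecessor) of $u$ in counterclockwise order on the convex hull, is the element $y$ with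 $\chi(u,y,z)=1$ (resp. $\chi(y,u,z)=1$) for all $z\notin\{u,y\}$. Join: given rooted chirotopes $(\chi_1,u_1)$ on $X_1\cup\{u_1\}$ and $(\chi_2,u_2)$ on $X_2\cup\{u_2\}$, let $X_3$ be the disjoint union of $X_1$ and $X_2$ in which $u_1^-$ and $u_2^+$ are identified into one element $x_0$ (so $X_1,X_2\subseteq X_3$ with $X_1\cap X_2=\{x_0\}$), and let $u_3$ be a new element. The join $(\chi_3,u_3)$ has $\chi_3$ the sign function on $X_3\cup\{u_3\}$ determined (using symmetry) by: for $x,y,z\in X_3$, $\chi_3(x,y,z)=\chi_1(x,y,z)$ if $x,y,z\in X_1$; $=\chi_2(x,y,z)$ if $x,y,z\in X_2$; $=\chi_1(x,y,u_1)$ if $x,y\in X_1$ and $z\in X_2\setminus\{u_2^+\}$; $=\chi_2(u_2,y,z)$ if $x\in X_1\setminus\{u_1^-\}$ and $y,z\in X_2$; and for $x,y\in X_3$, $\chi_3(x,y,u_3)=\chi_1(x,y,u_1)$ if $x,y\in X_1$; $=\chi_2(x,y,u_2)$ if $x,y\in X_2$; $=1$ if $x\in X_1\setminus\{u_1^-\}$ and $y\in X_2\setminus\{u_2^+\}$. (These rules are consistent and determine $\chi_3$ on all triples.) *)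

theory Defs
  imports "HOL-Analysis.Analysis"
begin

text \<open>Sign functions are modelled as maps \<open>'a \<Rightarrow> 'a \<Rightarrow> 'a \<Rightarrow> int\<close>; only their
  values on triples of distinct elements of the ground set matter.\<close>

definition sign_function :: "'a set \<Rightarrow> ('a \<Rightarrow> 'a \<Rightarrow> 'a \<Rightarrow> int) \<Rightarrow> bool" where
  "sign_function E chi \<longleftrightarrow> finite E \<and>
     (\<forall>x\<in>E. \<forall>y\<in>E. \<forall>z\<in>E. distinct [x, y, z] \<longrightarrow>
        chi x y z \<in> {-1, 1} \<and>
        chi x y z = chi y z x \<and> chi y z x = chi z x y \<and> chi z x y = - chi z y x \<and>
        - chi z y x = - chi y x z \<and> - chi y x z = - chi x z y)"

definition chirotope :: "'a set \<Rightarrow> ('a \<Rightarrow> 'a \<Rightarrow> 'a \<Rightarrow> int) \<Rightarrow> bool" where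
  "chirotope E chi \<longleftrightarrow> sign_function E chi \<and>
     (\<forall>t\<in>E. \<forall>x\<in>E. \<forall>y\<in>E. \<forall>z\<in>E. distinct [t, x, y, z] \<longrightarrow>
        chi t y z = 1 \<longrightarrow> chi x t z = 1 \<longrightarrow> chi x y t = 1 \<longrightarrow> chi x y z = 1) \<and>
     (\<forall>s\<in>E. \<forall>t\<in>E. \<forall>x\<in>E. \<forall>y\<in>E. \<forall>z\<in>E. distinct [s, t, x, y, z] \<longrightarrow>
        chi t s x = 1 \<longrightarrow> chi t s y = 1 \<longrightarrow> chi t s z = 1 \<longrightarrow> chi x y t = 1 \<longrightarrow> chi y z t = 1 \<longrightarrow>
        chi x z t = 1)"

definition ccw :: "real \<times> real \<Rightarrow> real \<times> real \<Rightarrow> real \<times> real \<Rightarrow> bool" where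
  "ccw a b c \<longleftrightarrow>
     (fst b - fst a) * (snd c - snd a) - (snd b - snd a) * (fst c - fst a) > 0"

definition realizable :: "'a set \<Rightarrow> ('a \<Rightarrow> 'a \<Rightarrow> 'a \<Rightarrow> int) \<Rightarrow> bool" where
  "realizable E chi \<longleftrightarrow> (\<exists>p :: 'a \<Rightarrow> real \<times> real.
     (\<forall>x\<in>E. \<forall>y\<in>E. \<forall>z\<in>E. distinct [x, y, z] \<longrightarrow> \<not> collinear {p x, p y, p z}) \<and>
     (\<forall>x\<in>E. \<forall>y\<in>E. \<forall>z\<in>E. distinct [x, y, z] \<longrightarrow> (chi x y z = 1 \<longleftrightarrow> ccw (p x) (p y) (p z))))"

definition extreme :: "'a set \<Rightarrow> ('a \<Rightarrow> 'a \<Rightarrow> 'a \<Rightarrow> int) \<Rightarrow> 'a \<Rightarrow> bool" where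
  "extreme E chi x \<longleftrightarrow> x \<in> E \<and>
     (\<exists>y\<in>E. y \<noteq> x \<and> (\<forall>z\<in>E - {x, y}. \<forall>w\<in>E - {x, y}. chi x y z = chi x y w))"

definition rooted_chirotope :: "'a set \<Rightarrow> ('a \<Rightarrow> 'a \<Rightarrow> 'a \<Rightarrow> int) \<Rightarrow> 'a \<Rightarrow> bool" where
  "rooted_chirotope X chi u \<longleftrightarrow> u \<notin> X \<and> chirotope (insert u X) chi \<and> extreme (insert u X) chi u"

definition rooted_realizable_chirotope :: "'a set \<Rightarrow> ('a \<Rightarrow> 'a \<Rightarrow> 'a \<Rightarrow> int) \<Rightarrow> 'a \<Rightarrow> bool" where
  "rooted_realizable_chirotope X chi u \<longleftrightarrow> rooted_chirotope X chi u \<and> realizable (insert u X) chi"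

text \<open>Successor \<open>u\<^sup>+\<close> and predecessor \<open>u\<^sup>-\<close> of the root on the convex hull
  (ground set \<open>E = X \<union> {u}\<close>).\<close>
definition succ_root :: "'a set \<Rightarrow> ('a \<Rightarrow> 'a \<Rightarrow> 'a \<Rightarrow> int) \<Rightarrow> 'a \<Rightarrow> 'a" where
  "succ_root E chi u = (THE y. y \<in> E \<and> y \<noteq> u \<and> (\<forall>z\<in>E - {u, y}. chi u y z = 1))"

definition pred_root :: "'a set \<Rightarrow> ('a \<Rightarrow> 'a \<Rightarrow> 'a \<Rightarrow> int) \<Rightarrow> 'a \<Rightarrow> 'a" where
  "pred_root E chi u = (THE y. y \<in> E \<and> y \<noteq> u \<and> (\<forall>z\<in>E - {u, y}. chi y u z = 1))"

text \<open>The defining rules of the join (for one fixed ordering of the triple);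
  \<open>x0\<close> is the identified element \<open>u\<^sub>1\<^sup>- = u\<^sub>2\<^sup>+\<close>.\<close>
definition join_rule ::
  "'a set \<Rightarrow> ('a \<Rightarrow> 'a \<Rightarrow> 'a \<Rightarrow> int) \<Rightarrow> 'a \<Rightarrow> 'a set \<Rightarrow> ('a \<Rightarrow> 'a \<Rightarrow> 'a \<Rightarrow> int) \<Rightarrow> 'a
   \<Rightarrow> 'a \<Rightarrow> 'a \<Rightarrow> 'a \<Rightarrow> 'a \<Rightarrow> 'a \<Rightarrow> int option" where
  "join_rule X1 chi1 u1 X2 chi2 u2 x0 u3 x y z =
     (if x \<in> X1 \<and> y \<in> X1 \<and> z \<in> X1 then Some (chi1 x y z)
      else if x \<in> X2 \<and> y \<in> X2 \<and> z \<in> X2 then Some (chi2 x y z)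
      else if x \<in> X1 \<and> y \<in> X1 \<and> z \<in> X2 - {x0} then Some (chi1 x y u1)
      else if x \<in> X1 - {x0} \<and> y \<in> X2 \<and> z \<in> X2 then Some (chi2 u2 y z)
      else if z = u3 \<and> x \<in> X1 \<and> y \<in> X1 then Some (chi1 x y u1)
      else if z = u3 \<and> x \<in> X2 \<and> y \<in> X2 then Some (chi2 x y u2)
      else if z = u3 \<and> x \<in> X1 - {x0} \<and> y \<in> X2 - {x0} then Some 1
      else None)"

text \<open>The join sign function \<open>chi\<^sub>3\<close>, extended to all orderings of a triple by the
  symmetry of sign functions (the value 0 is used outside the ground set).\<close>
definition join_chi ::
  "'a set \<Rightarrow> ('a \<Rightarrow> 'a \<Rightarrow> 'a \<Rightarrow> int) \<Rightarrow> 'a \<Rightarrow> 'a set \<Rightarrow> ('a \<Rightarrow> 'a \<Rightarrow> 'a \<Rightarrow> int) \<Rightarrow> 'a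
   \<Rightarrow> 'a \<Rightarrow> 'a \<Rightarrow> 'a \<Rightarrow> 'a \<Rightarrow> int" where
  "join_chi X1 chi1 u1 X2 chi2 u2 u3 x y z =
     (let x0 = pred_root (insert u1 X1) chi1 u1;
          r = join_rule X1 chi1 u1 X2 chi2 u2 x0 u3
      in case r x y z of Some v \<Rightarrow> v | None \<Rightarrow>
         (case r y z x of Some v \<Rightarrow> v | None \<Rightarrow>
         (case r z x y of Some v \<Rightarrow> v | None \<Rightarrow>
         (case r z y x of Some v \<Rightarrow> - v | None \<Rightarrow>
         (case r y x z of Some v \<Rightarrow> - v | None \<Rightarrow>
         (case r x z y of Some v \<Rightarrow> - v | None \<Rightarrow> 0))))))"

end

theory Submission
  imports Defs
begin

(* Realize chi1 with u1 at the origin and x0 = u1^- at (1, 0), so that X1 - {x0} lies in the open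
   lower half plane, and realize chi2 likewise with u2 at the origin and x0 = u2^+ at (1, 0), so that
   X2 - {x0} lies in the open upper half plane.  A projective map of determinant e^5 that fixes
   (1, 0) squeezes, as e -> 0, the upper half plane of the second picture into the place of u1 in
   the first one; the new root u3 is the image of the point (0, e^2) just above u2.  For small e
   the orientation of every triple is decided by the leading term of its expansion in e, and these
   leading terms are exactly the signs prescribed by the join.  That u3 is extreme, with u1^+ as
   witness, can be read off the join rules directly. *)

section \<open>Orientation of planar triples\<close>

definition orient :: "real \<times> real \<Rightarrow> real \<times> real \<Rightarrow> real \<times> real \<Rightarrow> real" where
  "orient a b c = (fst b - fst a) * (snd c - snd a) - (snd b - snd a) * (fst c - fst a)"

definition cross :: "real \<times> real \<Rightarrow> real \<times> real \<Rightarrow> real" where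
  "cross v w = fst v * snd w - snd v * fst w"

lemma ccw_iff_orient_pos: "ccw a b c \<longleftrightarrow> orient a b c > 0"
  by (simp add: ccw_def orient_def)

lemma orient_perm:
  "orient b c a = orient a b c" "orient c a b = orient a b c"
  "orient b a c = - orient a b c" "orient a c b = - orient a b c" "orient c b a = - orient a b c"
  by (simp_all add: orient_def algebra_simps)

lemma orient_eq_cross: "orient a b c = cross (b - a) (c - a)"
  by (simp add: orient_def cross_def)

lemma orient_0_left: "orient 0 a b = cross a b"
  by (simp add: orient_eq_cross)

lemma orient_split: "orient a b c = orient t b c + orient a t c + orient a b t"
  by (simp add: orient_def algebra_simps)

lemma cross_Grassmann_Pluecker: "cross s y * cross x z = cross s x * cross y z + cross s z * cross x y"
  by (simp add: cross_def algebra_simps)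

lemma cross_eq_0_iff: "cross v w = 0 \<longleftrightarrow> v = 0 \<or> w = 0 \<or> (\<exists>k. w = k *\<^sub>R v)"
proof
  assume vw: "cross v w = 0"
  show "v = 0 \<or> w = 0 \<or> (\<exists>k. w = k *\<^sub>R v)"
  proof (cases "fst v = 0")
    case True
    then show ?thesis
      using vw by (cases "snd v = 0") (auto simp: cross_def prod_eq_iff intro!: exI[of _ "snd w / snd v"])
  next
    case False
    then have "w = (fst w / fst v) *\<^sub>R v"
      using vw by (simp add: cross_def prod_eq_iff field_simps)
    then show ?thesis by blast
  qed
qed (auto simp: cross_def)

lemma collinear_iff_orient_eq_0: "collinear {a, b, c} \<longleftrightarrow> orient a b c = 0"
proof -
  have "collinear {a, b, c} \<longleftrightarrow> collinear {0, a - b, c - b}"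
    by (rule collinear_3) simp
  also have "\<dots> \<longleftrightarrow> cross (a - b) (c - b) = 0"
    by (simp add: collinear_lemma cross_eq_0_iff)
  also have "cross (a - b) (c - b) = - orient a b c"
    by (simp add: orient_def cross_def algebra_simps)
  finally show ?thesis by simp
qed

lemma orient_affine:
  "orient (\<alpha> * fst a + \<beta> * snd a + t1, \<gamma> * fst a + \<delta> * snd a + t2)
          (\<alpha> * fst b + \<beta> * snd b + t1, \<gamma> * fst b + \<delta> * snd b + t2)
          (\<alpha> * fst c + \<beta> * snd c + t1, \<gamma> * fst c + \<delta> * snd c + t2)
   = (\<alpha> * \<delta> - \<beta> * \<gamma>) * orient a b c"
  by (simp add: orient_def algebra_simps)

section \<open>Realizations\<close>

definition oriented_as :: "real \<times> real \<Rightarrow> real \<times> real \<Rightarrow> real \<times> real \<Rightarrow> int \<Rightarrow> bool" where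
  "oriented_as a b c s \<longleftrightarrow> s \<noteq> 0 \<and> of_int s = sgn (orient a b c)"

definition realization :: "'a set \<Rightarrow> ('a \<Rightarrow> 'a \<Rightarrow> 'a \<Rightarrow> int) \<Rightarrow> ('a \<Rightarrow> real \<times> real) \<Rightarrow> bool" where
  "realization E chi p \<longleftrightarrow> (\<forall>x\<in>E. \<forall>y\<in>E. \<forall>z\<in>E. distinct [x, y, z] \<longrightarrow>
     oriented_as (p x) (p y) (p z) (chi x y z))"

lemma oriented_as_iff:
  "oriented_as a b c s \<longleftrightarrow> (orient a b c > 0 \<and> s = 1) \<or> (orient a b c < 0 \<and> s = -1)"
  by (cases "orient a b c" "0 :: real" rule: linorder_cases) (auto simp: oriented_as_def)

lemma oriented_as_sgn_cong:
  "sgn (orient a b c) = sgn (orient a' b' c') \<Longrightarrow> oriented_as a b c s \<longleftrightarrow> oriented_as a' b' c' s"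
  by (simp add: oriented_as_def)

lemma eventually_oriented_as_transfer:
  assumes "eventually (\<lambda>e. sgn (orient (a' e) (b' e) (c' e)) = sgn (orient a b c)) F"
    and "oriented_as a b c s"
  shows "eventually (\<lambda>e. oriented_as (a' e) (b' e) (c' e) s) F"
  using assms(1) by eventually_elim (use assms(2) oriented_as_sgn_cong in blast)

lemma oriented_as_perm:
  "oriented_as b c a s \<longleftrightarrow> oriented_as a b c s"
  "oriented_as c a b s \<longleftrightarrow> oriented_as a b c s"
  "oriented_as b a c s \<longleftrightarrow> oriented_as a b c (- s)"
  "oriented_as a c b s \<longleftrightarrow> oriented_as a b c (- s)"
  "oriented_as c b a s \<longleftrightarrow> oriented_as a b c (- s)"
  using orient_perm[of a b c] by (auto simp: oriented_as_iff)

lemma realizationD: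
  "realization E chi p \<Longrightarrow> x \<in> E \<Longrightarrow> y \<in> E \<Longrightarrow> z \<in> E \<Longrightarrow> distinct [x, y, z] \<Longrightarrow>
    oriented_as (p x) (p y) (p z) (chi x y z)"
  by (simp add: realization_def)

lemma realization_eq_1_iff:
  "realization E chi p \<Longrightarrow> x \<in> E \<Longrightarrow> y \<in> E \<Longrightarrow> z \<in> E \<Longrightarrow> distinct [x, y, z] \<Longrightarrow>
    chi x y z = 1 \<longleftrightarrow> orient (p x) (p y) (p z) > 0"
  by (drule (4) realizationD) (auto simp: oriented_as_iff)

lemma oriented_as_iff_sign:
  "s \<in> {-1, 1} \<Longrightarrow> oriented_as a b c s \<longleftrightarrow> orient a b c \<noteq> 0 \<and> (s = 1 \<longleftrightarrow> orient a b c > 0)"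
  by (auto simp: oriented_as_iff)

lemma realizable_iff_ex_realization:
  assumes "sign_function E chi"
  shows "realizable E chi \<longleftrightarrow> (\<exists>p. realization E chi p)"
proof -
  have "oriented_as (p x) (p y) (p z) (chi x y z) \<longleftrightarrow>
      \<not> collinear {p x, p y, p z} \<and> (chi x y z = 1 \<longleftrightarrow> ccw (p x) (p y) (p z))"
    if "x \<in> E" "y \<in> E" "z \<in> E" "distinct [x, y, z]" for p x y z
  proof -
    have "chi x y z \<in> {-1, 1}"
      using assms that unfolding sign_function_def by blast
    then show ?thesis
      by (simp add: oriented_as_iff_sign collinear_iff_orient_eq_0 ccw_iff_orient_pos)
  qed
  then show ?thesis
    unfolding realizable_def realization_def by (simp add: imp_conjR ball_conj_distrib)
qed

lemma realization_sign_function: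
  assumes "finite E" "realization E chi p"
  shows "sign_function E chi"
  unfolding sign_function_def
proof (intro conjI ballI impI assms(1))
  fix x y z assume xyz: "x \<in> E" "y \<in> E" "z \<in> E" "distinct [x, y, z]"
  have "distinct [y, z, x]" "distinct [z, x, y]" "distinct [z, y, x]" "distinct [y, x, z]"
    "distinct [x, z, y]"
    using xyz(4) by auto
  with xyz realizationD[OF assms(2)]
  have "oriented_as (p x) (p y) (p z) (chi x y z)" "oriented_as (p x) (p y) (p z) (chi y z x)"
    "oriented_as (p x) (p y) (p z) (chi z x y)" "oriented_as (p x) (p y) (p z) (- chi z y x)"
    "oriented_as (p x) (p y) (p z) (- chi y x z)" "oriented_as (p x) (p y) (p z) (- chi x z y)"
    by (metis, metis oriented_as_perm(1), metis oriented_as_perm(2), metis oriented_as_perm(5),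
        metis oriented_as_perm(3), metis oriented_as_perm(4))
  then show "chi x y z \<in> {-1, 1}" "chi x y z = chi y z x" "chi y z x = chi z x y"
    "chi z x y = - chi z y x" "- chi z y x = - chi y x z" "- chi y x z = - chi x z y"
    by (auto simp: oriented_as_iff)
qed

lemma realization_chirotope:
  assumes "finite E" "realization E chi p"
  shows "chirotope E chi"
  unfolding chirotope_def
proof (intro conjI ballI impI realization_sign_function[OF assms])
  note pos_iff = realization_eq_1_iff[OF assms(2)]
  fix t x y z assume E: "t \<in> E" "x \<in> E" "y \<in> E" "z \<in> E" "distinct [t, x, y, z]"
    and "chi t y z = 1" "chi x t z = 1" "chi x y t = 1"
  moreover have "distinct [t, y, z]" "distinct [x, t, z]" "distinct [x, y, t]" "distinct [x, y, z]"
    using E(5) by auto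
  ultimately show "chi x y z = 1"
    using E orient_split[of "p x" "p y" "p z" "p t"] pos_iff[of t y z] pos_iff[of x t z]
      pos_iff[of x y t] pos_iff[of x y z] by simp
next
  note pos_iff = realization_eq_1_iff[OF assms(2)]
  fix s t x y z assume E: "s \<in> E" "t \<in> E" "x \<in> E" "y \<in> E" "z \<in> E" "distinct [s, t, x, y, z]"
    and chi: "chi t s x = 1" "chi t s y = 1" "chi t s z = 1" "chi x y t = 1" "chi y z t = 1"
  define c where "c a b = cross (p a - p t) (p b - p t)" for a b
  have orient_c: "orient (p t) (p a) (p b) = c a b" "orient (p a) (p b) (p t) = c a b" for a b
    using orient_perm(2)[of "p t" "p a" "p b"] by (simp_all add: c_def orient_eq_cross)
  have "distinct [t, s, x]" "distinct [t, s, y]" "distinct [t, s, z]" "distinct [x, y, t]"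
    "distinct [y, z, t]" "distinct [x, z, t]"
    using E(6) by auto
  with E chi have pos: "c s x > 0" "c s y > 0" "c s z > 0" "c x y > 0" "c y z > 0"
    and goal: "chi x z t = 1 \<longleftrightarrow> c x z > 0"
    by (simp_all add: pos_iff orient_c)
  have "c s y * c x z = c s x * c y z + c s z * c x y"
    unfolding c_def by (rule cross_Grassmann_Pluecker)
  also have "\<dots> > 0"
    using pos by (simp add: add_pos_pos)
  finally have "c x z > 0"
    using pos(2) by (simp add: zero_less_mult_iff)
  then show "chi x z t = 1"
    using goal by simp
qed

lemma realization_comp:
  assumes "realization E chi p" "k > 0" "\<And>a b c. orient (f a) (f b) (f c) = k * orient a b c"
  shows "realization E chi (f \<circ> p)"
  using assms unfolding realization_def oriented_as_def by (simp add: sgn_mult)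

lemma realization_normalize:
  assumes p: "realization E chi p" and "u \<in> E" "x0 \<in> E" "u \<noteq> x0"
  obtains q where "realization E chi q" "q u = 0" "q x0 = (1, 0)"
proof (cases "p u = p x0")
  case True
  have "E \<subseteq> {u, x0}"
  proof
    fix z assume "z \<in> E"
    show "z \<in> {u, x0}"
    proof (rule ccontr)
      assume "z \<notin> {u, x0}"
      then have "orient (p u) (p x0) (p z) \<noteq> 0"
        using realizationD[OF p] assms \<open>z \<in> E\<close> by (force simp: oriented_as_def)
      then show False
        using True by (simp add: orient_def)
    qed
  qed
  then have "realization E chi (\<lambda>v. if v = u then 0 else (1, 0))"
    unfolding realization_def by auto
  then show ?thesis
    using that assms by auto
next
  case False
  define d1 d2 where "d1 = fst (p x0) - fst (p u)" and "d2 = snd (p x0) - snd (p u)"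
  define n where "n = d1\<^sup>2 + d2\<^sup>2"
  have "n > 0"
    using False by (auto simp: n_def d1_def d2_def sum_power2_gt_zero_iff prod_eq_iff)
  define f where "f v = ((d1 * (fst v - fst (p u)) + d2 * (snd v - snd (p u))) / n,
    (d1 * (snd v - snd (p u)) - d2 * (fst v - fst (p u))) / n)" for v
  have "orient (f a) (f b) (f c) = (1 / n) * orient a b c" for a b c
  proof -
    have "f v = (d1 / n * fst v + d2 / n * snd v + (- (d1 * fst (p u) + d2 * snd (p u)) / n),
        (- d2 / n) * fst v + d1 / n * snd v + (d2 * fst (p u) - d1 * snd (p u)) / n)" for v
      using \<open>n > 0\<close> by (simp add: f_def field_simps)
    then have "orient (f a) (f b) (f c) = (d1 / n * (d1 / n) - d2 / n * (- d2 / n)) * orient a b c"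
      by (simp only: orient_affine)
    also have "d1 / n * (d1 / n) - d2 / n * (- d2 / n) = n / (n * n)"
      by (simp add: n_def power2_eq_square add_divide_distrib)
    also have "\<dots> = 1 / n"
      using \<open>n > 0\<close> by simp
    finally show ?thesis .
  qed
  moreover have "f (p u) = 0" "f (p x0) = (1, 0)"
    using \<open>n > 0\<close> by (simp_all add: f_def d1_def d2_def n_def field_simps power2_eq_square zero_prod_def)
  ultimately show ?thesis
    using that realization_comp[OF p, of "1 / n" f] \<open>n > 0\<close> by simp
qed

section \<open>The neighbours of the root on the convex hull\<close>

lemma cross_antisym: "cross w v = - cross v w"
  by (simp add: cross_def)

lemma halfplane_angular_extremes:
  fixes v :: "'b \<Rightarrow> real \<times> real"
  assumes "finite T" "T \<noteq> {}"
    and side: "\<And>a. a \<in> T \<Longrightarrow> cross w (v a) > 0"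
    and nonparallel: "\<And>a b. a \<in> T \<Longrightarrow> b \<in> T \<Longrightarrow> a \<noteq> b \<Longrightarrow> cross (v a) (v b) \<noteq> 0"
  shows "\<exists>y\<in>T. \<forall>z\<in>T - {y}. cross (v y) (v z) > 0"
    and "\<exists>y\<in>T. \<forall>z\<in>T - {y}. cross (v z) (v y) > 0"
proof -
  \<comment> \<open>the cotangent of the angle from \<open>w\<close> to \<open>v a\<close> orders \<open>T\<close> angularly\<close>
  define cot where "cot a = (fst w * fst (v a) + snd w * snd (v a)) / cross w (v a)" for a
  have "w \<noteq> 0"
    using side \<open>T \<noteq> {}\<close> by (force simp: cross_def)
  then have w: "(fst w)\<^sup>2 + (snd w)\<^sup>2 > 0"
    by (simp add: sum_power2_gt_zero_iff prod_eq_iff)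
  have ordered: "cross (v a) (v b) > 0" if "a \<in> T" "b \<in> T" "a \<noteq> b" "cot b \<le> cot a" for a b
  proof -
    have "cross w (v a) \<noteq> 0" "cross w (v b) \<noteq> 0"
      using side that(1,2) by (metis less_irrefl)+
    then have "(cot a - cot b) * (cross w (v a) * cross w (v b)) =
        (fst w * fst (v a) + snd w * snd (v a)) * cross w (v b)
        - (fst w * fst (v b) + snd w * snd (v b)) * cross w (v a)"
      by (simp add: cot_def field_simps)
    also have "\<dots> = ((fst w)\<^sup>2 + (snd w)\<^sup>2) * cross (v a) (v b)"
      by (simp add: cross_def power2_eq_square algebra_simps)
    moreover have "(cot a - cot b) * (cross w (v a) * cross w (v b)) \<ge> 0"
      using that(4) side[OF that(1)] side[OF that(2)]
      by (intro mult_nonneg_nonneg) simp_all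
    ultimately have "cross (v a) (v b) \<ge> 0"
      using w by (simp add: zero_le_mult_iff)
    then show ?thesis
      using nonparallel that by force
  qed
  obtain y where y: "is_arg_min (\<lambda>a. - cot a) (\<lambda>a. a \<in> T) y"
    using ex_is_arg_min_if_finite[OF assms(1,2)] by blast
  then show "\<exists>y\<in>T. \<forall>z\<in>T - {y}. cross (v y) (v z) > 0"
    by (auto simp: is_arg_min_linorder intro!: bexI[of _ y] ordered)
  obtain y' where y': "is_arg_min cot (\<lambda>a. a \<in> T) y'"
    using ex_is_arg_min_if_finite[OF assms(1,2)] by blast
  then show "\<exists>y\<in>T. \<forall>z\<in>T - {y}. cross (v z) (v y) > 0"
    by (auto simp: is_arg_min_linorder intro!: bexI[of _ y'] ordered)
qed

lemma sign_function_perm: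
  assumes "sign_function E chi" "x \<in> E" "y \<in> E" "z \<in> E" "distinct [x, y, z]"
  shows "chi y z x = chi x y z" "chi x z y = - chi x y z" "chi z y x = - chi x y z"
proof -
  have "chi x y z = chi y z x" "chi y z x = chi z x y" "chi z x y = - chi z y x"
    "- chi z y x = - chi y x z" "- chi y x z = - chi x z y"
    using assms unfolding sign_function_def by blast+
  then show "chi y z x = chi x y z" "chi x z y = - chi x y z" "chi z y x = - chi x y z"
    by linarith+
qed

lemma rooted_realizable_chirotopeD:
  assumes "rooted_realizable_chirotope X chi u"
  shows "u \<notin> X" "finite X" "sign_function (insert u X) chi" "extreme (insert u X) chi u"
    "\<exists>p. realization (insert u X) chi p"
proof -
  have "chirotope (insert u X) chi" "realizable (insert u X) chi"
    and "u \<notin> X" "extreme (insert u X) chi u"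
    using assms unfolding rooted_realizable_chirotope_def rooted_chirotope_def by auto
  moreover from this(1) have sf: "sign_function (insert u X) chi"
    unfolding chirotope_def by simp
  moreover from sf have "finite X"
    unfolding sign_function_def by simp
  ultimately show "u \<notin> X" "finite X" "sign_function (insert u X) chi" "extreme (insert u X) chi u"
    "\<exists>p. realization (insert u X) chi p"
    using realizable_iff_ex_realization[OF sf] by simp_all
qed

lemma rooted_realization_normalized:
  assumes "rooted_realizable_chirotope X chi u" "x0 \<in> X"
  obtains q where "realization (insert u X) chi q" "q u = 0" "q x0 = (1, 0)"
  using rooted_realizable_chirotopeD[OF assms(1)] assms(2) realization_normalize[of "insert u X" chi]
  by (metis insertCI)

lemma realization_root_cross:
  assumes q: "realization (insert u X) chi q" "q u = 0" and "u \<notin> X" "a \<in> X" "b \<in> X" "a \<noteq> b"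
  shows "chi u a b = 1 \<longleftrightarrow> cross (q a) (q b) > 0" "chi a u b = 1 \<longleftrightarrow> cross (q b) (q a) > 0"
    "cross (q a) (q b) \<noteq> 0"
proof -
  have "distinct [u, a, b]" "distinct [a, u, b]"
    using assms(3-) by auto
  then have "oriented_as 0 (q a) (q b) (chi u a b)" "oriented_as (q a) 0 (q b) (chi a u b)"
    using realizationD[OF q(1)] assms(4,5) q(2) by (metis insertCI)+
  moreover have "orient (q a) 0 (q b) = cross (q b) (q a)"
    by (simp add: orient_def cross_def algebra_simps)
  ultimately show "chi u a b = 1 \<longleftrightarrow> cross (q a) (q b) > 0" "chi a u b = 1 \<longleftrightarrow> cross (q b) (q a) > 0"
    "cross (q a) (q b) \<noteq> 0"
    by (auto simp: oriented_as_iff orient_0_left)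
qed

lemma realization_pred_exists:
  assumes q: "realization (insert u X) chi q" "q u = 0" and "u \<notin> X" "finite X"
    and s: "s \<in> X" "\<forall>z\<in>X - {s}. chi u s z = 1"
  shows "\<exists>y\<in>X. \<forall>z\<in>X - {y}. chi y u z = 1"
proof (cases "X - {s} = {}")
  case True
  then show ?thesis
    using s(1) by blast
next
  case False
  note cross_iff = realization_root_cross[OF q assms(3)]
  have "finite (X - {s})"
    using assms(4) by simp
  moreover have "\<And>a. a \<in> X - {s} \<Longrightarrow> cross (q s) (q a) > 0"
    using s cross_iff by blast
  ultimately obtain y where y: "y \<in> X - {s}" "\<forall>z\<in>X - {s} - {y}. cross (q z) (q y) > 0"
    using halfplane_angular_extremes(2)[where v = q and w = "q s", OF _ False] cross_iff(3) by blast
  have "cross (q z) (q y) > 0" if "z \<in> X - {y}" for z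
    using that y cross_iff(1)[of s y] s by (cases "z = s") auto
  then show ?thesis
    using y(1) cross_iff(2) by blast
qed

lemma realization_succ_exists:
  assumes q: "realization (insert u X) chi q" "q u = 0" and "u \<notin> X" "finite X"
    and s: "s \<in> X" "\<forall>z\<in>X - {s}. chi s u z = 1"
  shows "\<exists>y\<in>X. \<forall>z\<in>X - {y}. chi u y z = 1"
proof (cases "X - {s} = {}")
  case True
  then show ?thesis
    using s(1) by blast
next
  case False
  note cross_iff = realization_root_cross[OF q assms(3)]
  have "finite (X - {s})"
    using assms(4) by simp
  moreover have "cross (- q s) (q a) > 0" if "a \<in> X - {s}" for a
  proof -
    have "cross (q a) (q s) > 0"
      using that s cross_iff(2)[of s a] by auto
    then show ?thesis
      by (simp add: cross_def mult.commute)
  qed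
  ultimately obtain y where y: "y \<in> X - {s}" "\<forall>z\<in>X - {s} - {y}. cross (q y) (q z) > 0"
    using halfplane_angular_extremes(1)[where v = q and w = "- q s", OF _ False] cross_iff(3) by blast
  have "cross (q y) (q z) > 0" if "z \<in> X - {y}" for z
    using that y cross_iff(2)[of s y] s by (cases "z = s") auto
  then show ?thesis
    using y(1) cross_iff(1) by blast
qed

lemma rooted_realizable_root_neighbours:
  assumes R: "rooted_realizable_chirotope X chi u"
  shows "\<exists>y\<in>X. \<forall>z\<in>X - {y}. chi u y z = 1" "\<exists>y\<in>X. \<forall>z\<in>X - {y}. chi y u z = 1"
proof -
  note D = rooted_realizable_chirotopeD[OF R]
  obtain s where "s \<in> insert u X" "s \<noteq> u"
    and const: "\<forall>z\<in>insert u X - {u, s}. \<forall>w\<in>insert u X - {u, s}. chi u s z = chi u s w"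
    using D(4) unfolding extreme_def by blast
  have "insert u X - {u, s} = X - {s}"
    using D(1) by auto
  then have s: "s \<in> X" "\<And>z w. z \<in> X - {s} \<Longrightarrow> w \<in> X - {s} \<Longrightarrow> chi u s z = chi u s w"
    using \<open>s \<in> insert u X\<close> \<open>s \<noteq> u\<close> const by blast+
  obtain q where q: "realization (insert u X) chi q" "q u = 0"
    using rooted_realization_normalized[OF R s(1)] by metis
  note cross_iff = realization_root_cross[OF q D(1)]
  have "(\<forall>z\<in>X - {s}. chi u s z = 1) \<or> (\<forall>z\<in>X - {s}. chi s u z = 1)"
  proof (cases "\<exists>z0\<in>X - {s}. chi u s z0 = 1")
    case True
    then obtain z0 where z0: "z0 \<in> X - {s}" "chi u s z0 = 1"
      by blast
    have "chi u s z = 1" if "z \<in> X - {s}" for z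
      using s(2)[OF that z0(1)] z0(2) by (rule trans)
    then show ?thesis
      by blast
  next
    case False
    have "chi s u z = 1" if "z \<in> X - {s}" for z
    proof -
      have "\<not> cross (q s) (q z) > 0" "cross (q s) (q z) \<noteq> 0"
        using False that cross_iff(1,3)[of s z] s(1) by auto
      then have "cross (q z) (q s) > 0"
        using cross_antisym[of "q z" "q s"] by linarith
      then show ?thesis
        using cross_iff(2)[of s z] that s(1) by auto
    qed
    then show ?thesis
      by blast
  qed
  then show "\<exists>y\<in>X. \<forall>z\<in>X - {y}. chi u y z = 1" "\<exists>y\<in>X. \<forall>z\<in>X - {y}. chi y u z = 1"
    using realization_pred_exists[OF q D(1,2) s(1)] realization_succ_exists[OF q D(1,2) s(1)] s(1)
    by blast+
qed

lemma succ_root_spec: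
  assumes R: "rooted_realizable_chirotope X chi u"
  shows "succ_root (insert u X) chi u \<in> X"
    "\<forall>z\<in>X - {succ_root (insert u X) chi u}. chi u (succ_root (insert u X) chi u) z = 1"
proof -
  note D = rooted_realizable_chirotopeD[OF R]
  obtain y where y: "y \<in> X" "\<forall>z\<in>X - {y}. chi u y z = 1"
    using rooted_realizable_root_neighbours(1)[OF R] by blast
  have "succ_root (insert u X) chi u = y"
    unfolding succ_root_def
  proof (rule the_equality)
    show "y \<in> insert u X \<and> y \<noteq> u \<and> (\<forall>z\<in>insert u X - {u, y}. chi u y z = 1)"
      using y D(1) by auto
  next
    fix y' assume y': "y' \<in> insert u X \<and> y' \<noteq> u \<and> (\<forall>z\<in>insert u X - {u, y'}. chi u y' z = 1)"
    show "y' = y"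
    proof (rule ccontr)
      assume "y' \<noteq> y"
      then have "chi u y y' = 1" "chi u y' y = 1" "distinct [u, y, y']"
        using y y' D(1) by auto
      then show False
        using sign_function_perm(2)[OF D(3), of u y y'] y y' by auto
    qed
  qed
  then show "succ_root (insert u X) chi u \<in> X"
    "\<forall>z\<in>X - {succ_root (insert u X) chi u}. chi u (succ_root (insert u X) chi u) z = 1"
    using y by auto
qed

lemma pred_root_spec:
  assumes R: "rooted_realizable_chirotope X chi u"
  shows "pred_root (insert u X) chi u \<in> X"
    "\<forall>z\<in>X - {pred_root (insert u X) chi u}. chi (pred_root (insert u X) chi u) u z = 1"
proof -
  note D = rooted_realizable_chirotopeD[OF R]
  obtain y where y: "y \<in> X" "\<forall>z\<in>X - {y}. chi y u z = 1"
    using rooted_realizable_root_neighbours(2)[OF R] by blast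
  have "pred_root (insert u X) chi u = y"
    unfolding pred_root_def
  proof (rule the_equality)
    show "y \<in> insert u X \<and> y \<noteq> u \<and> (\<forall>z\<in>insert u X - {u, y}. chi y u z = 1)"
      using y D(1) by auto
  next
    fix y' assume y': "y' \<in> insert u X \<and> y' \<noteq> u \<and> (\<forall>z\<in>insert u X - {u, y'}. chi y' u z = 1)"
    show "y' = y"
    proof (rule ccontr)
      assume "y' \<noteq> y"
      then have "chi y u y' = 1" "chi y' u y = 1" "distinct [y, u, y']"
        using y y' D(1) by auto
      then show False
        using sign_function_perm(3)[OF D(3), of y u y'] y y' by auto
    qed
  qed
  then show "pred_root (insert u X) chi u \<in> X"
    "\<forall>z\<in>X - {pred_root (insert u X) chi u}. chi (pred_root (insert u X) chi u) u z = 1"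
    using y by auto
qed

section \<open>A projective collapse\<close>

type_synonym hpoint = "real \<times> real \<times> real"

definition det3 :: "hpoint \<Rightarrow> hpoint \<Rightarrow> hpoint \<Rightarrow> real" where
  "det3 a b c = fst a * (fst (snd b) * snd (snd c) - snd (snd b) * fst (snd c))
    - fst (snd a) * (fst b * snd (snd c) - snd (snd b) * fst c)
    + snd (snd a) * (fst b * fst (snd c) - fst (snd b) * fst c)"

definition hom :: "real \<times> real \<Rightarrow> hpoint" where
  "hom v = (fst v, snd v, 1)"

definition dehom :: "hpoint \<Rightarrow> real \<times> real" where
  "dehom w = (fst w / snd (snd w), fst (snd w) / snd (snd w))"

lemma dehom_hom [simp]: "dehom (hom v) = v"
  by (simp add: dehom_def hom_def)

lemma hom_weight [simp]: "snd (snd (hom v)) = 1"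
  by (simp add: hom_def)

lemma det3_hom: "det3 (hom a) (hom b) (hom c) = orient a b c"
  by (simp add: det3_def hom_def orient_def algebra_simps)

lemma sgn_orient_dehom:
  assumes "snd (snd a) > 0" "snd (snd b) > 0" "snd (snd c) > 0"
  shows "sgn (orient (dehom a) (dehom b) (dehom c)) = sgn (det3 a b c)"
proof -
  have "orient (dehom a) (dehom b) (dehom c) = det3 a b c / (snd (snd a) * snd (snd b) * snd (snd c))"
    using assms by (simp add: orient_def dehom_def det3_def field_simps)
  then show ?thesis
    using assms by (simp add: sgn_mult)
qed

text \<open>A linear map of determinant \<open>e ^ 5\<close> fixing the point \<open>(1, 0)\<close>; as \<open>e \<rightarrow> 0\<close> it contracts
  the open upper half plane to the origin.\<close>

definition collapse :: "real \<Rightarrow> real \<Rightarrow> hpoint \<Rightarrow> hpoint" where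
  "collapse K e w = (fst w * e\<^sup>2 - K * (snd (snd w) - fst w) * e ^ 3, - (snd (snd w) - fst w) * e ^ 3,
      fst w * e\<^sup>2 + (snd (snd w) - fst w) * e ^ 3 + fst (snd w))"

definition collapsed :: "real \<Rightarrow> real \<Rightarrow> real \<times> real \<Rightarrow> real \<times> real" where
  "collapsed K e v = dehom (collapse K e (hom v))"

definition root_hpoint :: "real \<Rightarrow> real \<Rightarrow> hpoint" where
  "root_hpoint K e = (- K * e, - e, 1 + e)"

definition root_point :: "real \<Rightarrow> real \<Rightarrow> real \<times> real" where
  "root_point K e = dehom (root_hpoint K e)"

lemma det3_collapse: "det3 (collapse K e a) (collapse K e b) (collapse K e c) = e ^ 5 * det3 a b c"
  by (simp add: det3_def collapse_def algebra_simps power2_eq_square power3_eq_cube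
      power_numeral_reduce)

lemma collapse_weight: "snd (snd (collapse K e (hom v))) = fst v * e\<^sup>2 + (1 - fst v) * e ^ 3 + snd v"
  by (simp add: collapse_def hom_def)

lemma collapsed_fixpoint: "e \<noteq> 0 \<Longrightarrow> collapsed K e (1, 0) = (1, 0)"
  by (simp add: collapsed_def collapse_def hom_def dehom_def)

lemma collapse_above_origin: "collapse K e (hom (0, e\<^sup>2)) = e\<^sup>2 *\<^sub>R root_hpoint K e"
  by (simp add: collapse_def hom_def root_hpoint_def algebra_simps power2_eq_square power3_eq_cube)

lemma root_point_eq_collapsed: "e \<noteq> 0 \<Longrightarrow> root_point K e = collapsed K e (0, e\<^sup>2)"
  by (simp add: root_point_def collapsed_def collapse_above_origin dehom_def)

lemma sgn_orient_collapsed: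
  assumes "e > 0" "snd (snd (collapse K e (hom a))) > 0" "snd (snd (collapse K e (hom b))) > 0"
    "snd (snd (collapse K e (hom c))) > 0"
  shows "sgn (orient (collapsed K e a) (collapsed K e b) (collapsed K e c)) = sgn (orient a b c)"
  using assms by (simp add: collapsed_def sgn_orient_dehom det3_collapse det3_hom sgn_mult)

lemma eventually_sgn_eq_at_right_0:
  fixes F G :: "real \<Rightarrow> real"
  assumes "isCont G 0" "G 0 \<noteq> 0" "\<And>e. e > 0 \<Longrightarrow> F e = e ^ k * G e"
  shows "eventually (\<lambda>e. sgn (F e) = sgn (G 0)) (at_right 0)"
proof -
  have "(G \<longlongrightarrow> G 0) (at_right 0)"
    using assms(1) unfolding isCont_def by (rule tendsto_within_subset) simp
  then have "eventually (\<lambda>e. sgn (G e) = sgn (G 0)) (at_right 0)"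
  proof (cases "G 0 > 0")
    case True
    show ?thesis
      using order_tendstoD(1)[OF \<open>(G \<longlongrightarrow> G 0) (at_right 0)\<close> True]
      by eventually_elim (simp add: True)
  next
    case False
    then have "G 0 < 0"
      using assms(2) by simp
    show ?thesis
      using order_tendstoD(2)[OF \<open>(G \<longlongrightarrow> G 0) (at_right 0)\<close> \<open>G 0 < 0\<close>]
      by eventually_elim (simp add: \<open>G 0 < 0\<close>)
  qed
  moreover have "eventually (\<lambda>e. e > (0::real)) (at_right 0)"
    by (rule eventually_at_right_less)
  ultimately show ?thesis
    by eventually_elim (simp add: assms(3) sgn_mult)
qed

lemma eventually_collapse_weight_pos:
  assumes "0 < snd v \<or> v = (1, 0)"
  shows "eventually (\<lambda>e. 0 < snd (snd (collapse K e (hom v)))) (at_right 0)"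
proof (cases "v = (1, 0)")
  case True
  have "eventually (\<lambda>e. e > (0::real)) (at_right 0)"
    by (rule eventually_at_right_less)
  then show ?thesis
    by eventually_elim (simp add: True collapse_weight)
next
  case False
  with assms have "0 < snd v"
    by simp
  define W where "W e = snd (snd (collapse K e (hom v)))" for e
  have "isCont W 0" "W 0 = snd v"
    unfolding W_def collapse_weight by (intro continuous_intros) simp
  then have "eventually (\<lambda>e. sgn (W e) = sgn (W 0)) (at_right 0)"
    using \<open>0 < snd v\<close> by (intro eventually_sgn_eq_at_right_0[where k = 0]) auto
  then show ?thesis
    by eventually_elim (use \<open>0 < snd v\<close> \<open>W 0 = snd v\<close> in \<open>simp add: W_def sgn_real_def split: if_splits\<close>)
qed

lemma eventually_sgn_orient_near_origin:
  fixes w :: "real \<Rightarrow> hpoint"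
  assumes "isCont w 0" "w 0 = (0, 0, t)" "t > 0" "orient a b 0 \<noteq> 0"
  shows "eventually (\<lambda>e. sgn (orient a b (dehom (w e))) = sgn (orient a b 0)) (at_right 0)"
proof -
  define G where "G e = det3 (hom a) (hom b) (w e)" for e
  have "isCont G 0"
    unfolding G_def det3_def by (intro continuous_intros assms(1))
  moreover have G0: "G 0 = t * orient a b 0"
    by (simp add: G_def det3_def hom_def orient_def assms(2) algebra_simps)
  ultimately have "eventually (\<lambda>e. sgn (G e) = sgn (G 0)) (at_right 0)"
    using assms(3,4) by (intro eventually_sgn_eq_at_right_0[where k = 0]) auto
  moreover have "(w \<longlongrightarrow> w 0) (at_right 0)"
    using assms(1) unfolding isCont_def by (rule tendsto_within_subset) simp
  then have "((\<lambda>e. snd (snd (w e))) \<longlongrightarrow> snd (snd (w 0))) (at_right 0)"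
    by (intro tendsto_snd)
  then have "eventually (\<lambda>e. snd (snd (w e)) > 0) (at_right 0)"
    using assms(2,3) by (simp add: order_tendstoD(1))
  ultimately show ?thesis
  proof eventually_elim
    case (elim e)
    have "sgn (orient a b (dehom (w e))) = sgn (G e)"
      using sgn_orient_dehom[of "hom a" "hom b" "w e"] elim(2) by (simp add: G_def)
    then show ?case
      using elim(1) G0 assms(3) by (simp add: sgn_mult)
  qed
qed

lemma eventually_sgn_orient_collapsed:
  assumes "0 < snd c" "orient a b 0 \<noteq> 0"
  shows "eventually (\<lambda>e. sgn (orient a b (collapsed K e c)) = sgn (orient a b 0)) (at_right 0)"
  unfolding collapsed_def
proof (rule eventually_sgn_orient_near_origin[where t = "snd c"])
  show "isCont (\<lambda>e. collapse K e (hom c)) 0"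
    unfolding collapse_def hom_def by (intro continuous_intros)
qed (use assms in \<open>simp_all add: collapse_def hom_def\<close>)

lemma eventually_sgn_orient_root:
  assumes "orient a b 0 \<noteq> 0"
  shows "eventually (\<lambda>e. sgn (orient a b (root_point K e)) = sgn (orient a b 0)) (at_right 0)"
  unfolding root_point_def
proof (rule eventually_sgn_orient_near_origin[where t = 1])
  show "isCont (root_hpoint K) 0"
    unfolding root_hpoint_def by (intro continuous_intros)
qed (use assms in \<open>simp_all add: root_hpoint_def\<close>)

lemma eventually_sgn_orient_two_collapsed:
  assumes "snd a < 0" "orient 0 y z \<noteq> 0" "0 < snd y \<or> y = (1, 0)" "0 < snd z \<or> z = (1, 0)"
  shows "eventually (\<lambda>e. sgn (orient a (collapsed K e y) (collapsed K e z)) = sgn (orient 0 y z))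
    (at_right 0)"
proof -
  \<comment> \<open>\<open>collapse K e (hom v) = e\<^sup>2 *\<^sub>R W e v + (0, 0, snd v)\<close>, so the determinant is of order \<open>e\<^sup>2\<close>\<close>
  define W where "W e v = (fst v - e * (1 - fst v) * K, - e * (1 - fst v), fst v + e * (1 - fst v))"
    for e :: real and v :: "real \<times> real"
  define G where "G e = snd y * det3 (hom a) (0, 0, 1) (W e z) + snd z * det3 (hom a) (W e y) (0, 0, 1)
    + e\<^sup>2 * det3 (hom a) (W e y) (W e z)" for e
  have "isCont G 0"
    unfolding G_def det3_def W_def hom_def by (intro continuous_intros)
  moreover have G0: "G 0 = - snd a * orient 0 y z"
    by (simp add: G_def det3_def W_def hom_def orient_def algebra_simps)
  moreover have "det3 (hom a) (collapse K e (hom y)) (collapse K e (hom z)) = e\<^sup>2 * G e" for e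
    by (simp add: G_def det3_def collapse_def hom_def W_def algebra_simps power2_eq_square
        power3_eq_cube)
  ultimately have "eventually (\<lambda>e. sgn (det3 (hom a) (collapse K e (hom y)) (collapse K e (hom z)))
      = sgn (G 0)) (at_right 0)"
    using assms(1,2) by (intro eventually_sgn_eq_at_right_0[where k = 2]) auto
  moreover note eventually_collapse_weight_pos[of y K, OF assms(3)]
    eventually_collapse_weight_pos[of z K, OF assms(4)]
  ultimately show ?thesis
  proof eventually_elim
    case (elim e)
    then have "sgn (orient a (collapsed K e y) (collapsed K e z))
        = sgn (det3 (hom a) (collapse K e (hom y)) (collapse K e (hom z)))"
      using sgn_orient_dehom[of "hom a" "collapse K e (hom y)" "collapse K e (hom z)"]
      by (simp add: collapsed_def)
    then show ?case
      using elim(1) G0 assms(1) by (simp add: sgn_mult)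
  qed
qed

lemma eventually_sgn_orient_collapsed_root:
  assumes "orient y z 0 \<noteq> 0" "0 < snd y \<or> y = (1, 0)" "0 < snd z \<or> z = (1, 0)"
  shows "eventually (\<lambda>e. sgn (orient (collapsed K e y) (collapsed K e z) (root_point K e))
    = sgn (orient y z 0)) (at_right 0)"
proof -
  have "isCont (\<lambda>e. orient y z (0, e\<^sup>2)) 0"
    unfolding orient_def by (intro continuous_intros)
  then have "eventually (\<lambda>e. sgn (orient y z (0, e\<^sup>2)) = sgn (orient y z 0)) (at_right 0)"
    using assms(1) eventually_sgn_eq_at_right_0[where k = 0 and G = "\<lambda>e. orient y z (0, e\<^sup>2)"]
    by (simp add: zero_prod_def)
  moreover note eventually_collapse_weight_pos[OF assms(2)] eventually_collapse_weight_pos[OF assms(3)]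
  moreover have "eventually (\<lambda>e. e > (0::real)) (at_right 0)"
    by (rule eventually_at_right_less)
  ultimately show ?thesis
    by eventually_elim
      (simp add: root_point_eq_collapsed sgn_orient_collapsed collapse_weight add_pos_pos)
qed

lemma eventually_orient_collapsed_root_pos:
  assumes "0 < fst a - K * snd a" "0 < snd c"
  shows "eventually (\<lambda>e. 0 < orient a (collapsed K e c) (root_point K e)) (at_right 0)"
proof -
  define W where "W e v = (fst v - e * (1 - fst v) * K, - e * (1 - fst v), fst v + e * (1 - fst v))"
    for e :: real and v :: "real \<times> real"
  define G where "G e = snd c * det3 (hom a) (0, 0, 1) (- K, - 1, 1) + e * det3 (hom a) (W e c) (0, 0, 1)
    + e\<^sup>2 * det3 (hom a) (W e c) (- K, - 1, 1)" for e
  have "isCont G 0"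
    unfolding G_def det3_def W_def hom_def by (intro continuous_intros)
  moreover have G0: "G 0 = snd c * (fst a - K * snd a)"
    by (simp add: G_def det3_def hom_def algebra_simps)
  moreover have "det3 (hom a) (collapse K e (hom c)) (root_hpoint K e) = e ^ 1 * G e" for e
    by (simp add: G_def det3_def collapse_def hom_def root_hpoint_def W_def algebra_simps
        power2_eq_square power3_eq_cube)
  ultimately have "eventually (\<lambda>e. sgn (det3 (hom a) (collapse K e (hom c)) (root_hpoint K e))
      = sgn (G 0)) (at_right 0)"
    using assms by (intro eventually_sgn_eq_at_right_0[where k = 1]) auto
  moreover have "eventually (\<lambda>e. 0 < snd (snd (collapse K e (hom c)))) (at_right 0)"
    using assms(2) by (simp add: eventually_collapse_weight_pos)
  moreover have "eventually (\<lambda>e. e > (0::real)) (at_right 0)"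
    by (rule eventually_at_right_less)
  ultimately show ?thesis
  proof eventually_elim
    case (elim e)
    then have "sgn (orient a (collapsed K e c) (root_point K e))
        = sgn (det3 (hom a) (collapse K e (hom c)) (root_hpoint K e))"
      using sgn_orient_dehom[of "hom a" "collapse K e (hom c)" "root_hpoint K e"]
      by (simp add: collapsed_def root_point_def root_hpoint_def)
    then have "sgn (orient a (collapsed K e c) (root_point K e)) = 1"
      using elim(1) G0 assms by (simp add: sgn_mult)
    then show ?case
      by (simp add: sgn_1_pos)
  qed
qed

section \<open>The join\<close>

lemma join_rule_eq_None_iff:
  "join_rule X1 chi1 u1 X2 chi2 u2 x0 u3 x y z = None \<longleftrightarrow>
    \<not> (x \<in> X1 \<and> y \<in> X1 \<and> z \<in> X1) \<and> \<not> (x \<in> X2 \<and> y \<in> X2 \<and> z \<in> X2) \<and>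
    \<not> (x \<in> X1 \<and> y \<in> X1 \<and> z \<in> X2 - {x0}) \<and> \<not> (x \<in> X1 - {x0} \<and> y \<in> X2 \<and> z \<in> X2) \<and>
    \<not> (z = u3 \<and> x \<in> X1 \<and> y \<in> X1) \<and> \<not> (z = u3 \<and> x \<in> X2 \<and> y \<in> X2) \<and>
    \<not> (z = u3 \<and> x \<in> X1 - {x0} \<and> y \<in> X2 - {x0})"
  by (simp add: join_rule_def)

lemma join_rule_covers:
  fixes X1 X2 :: "'a set" and chi1 chi2 :: "'a \<Rightarrow> 'a \<Rightarrow> 'a \<Rightarrow> int" and u1 u2 u3 x0 :: 'a
    and rule
  defines "rule \<equiv> join_rule X1 chi1 u1 X2 chi2 u2 x0 u3"
  assumes "X1 \<inter> X2 = {x0}" "u3 \<notin> X1 \<union> X2"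
    and "a \<in> insert u3 (X1 \<union> X2)" "b \<in> insert u3 (X1 \<union> X2)" "c \<in> insert u3 (X1 \<union> X2)"
    and "distinct [a, b, c]"
  shows "rule a b c \<noteq> None \<or> rule b c a \<noteq> None \<or> rule c a b \<noteq> None \<or>
    rule c b a \<noteq> None \<or> rule b a c \<noteq> None \<or> rule a c b \<noteq> None"
proof -
  have cases: "w \<in> X1 - {x0} \<or> w = x0 \<or> w \<in> X2 - {x0} \<or> w = u3"
    if "w \<in> insert u3 (X1 \<union> X2)" for w
    using that by blast
  have "x0 \<in> X1" "x0 \<in> X2" "\<And>w. w \<in> X1 - {x0} \<Longrightarrow> w \<notin> X2" "\<And>w. w \<in> X2 - {x0} \<Longrightarrow> w \<notin> X1"
    using assms(2) by auto
  with cases[OF assms(4)] cases[OF assms(5)] cases[OF assms(6)] show ?thesis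
    using assms(3,7) unfolding rule_def join_rule_eq_None_iff by (elim disjE) auto
qed

lemma realization_join_chi:
  fixes X1 X2 :: "'a set" and chi1 chi2 :: "'a \<Rightarrow> 'a \<Rightarrow> 'a \<Rightarrow> int" and u1 u2 u3 :: 'a
    and rule
  defines "rule \<equiv> join_rule X1 chi1 u1 X2 chi2 u2 (pred_root (insert u1 X1) chi1 u1) u3"
  assumes sound: "\<And>a b c v. a \<in> G \<Longrightarrow> b \<in> G \<Longrightarrow> c \<in> G \<Longrightarrow> distinct [a, b, c] \<Longrightarrow>
      rule a b c = Some v \<Longrightarrow> oriented_as (p a) (p b) (p c) v"
    and covers: "\<And>a b c. a \<in> G \<Longrightarrow> b \<in> G \<Longrightarrow> c \<in> G \<Longrightarrow> distinct [a, b, c] \<Longrightarrow>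
      rule a b c \<noteq> None \<or> rule b c a \<noteq> None \<or> rule c a b \<noteq> None \<or>
      rule c b a \<noteq> None \<or> rule b a c \<noteq> None \<or> rule a c b \<noteq> None"
  shows "realization G (join_chi X1 chi1 u1 X2 chi2 u2 u3) p"
  unfolding realization_def
proof (intro ballI impI)
  fix a b c assume abc: "a \<in> G" "b \<in> G" "c \<in> G" "distinct [a, b, c]"
  then have "distinct [b, c, a]" "distinct [c, a, b]" "distinct [c, b, a]" "distinct [b, a, c]"
    "distinct [a, c, b]"
    by auto
  with abc have "rule a b c = Some v \<Longrightarrow> oriented_as (p a) (p b) (p c) v"
    "rule b c a = Some v \<Longrightarrow> oriented_as (p a) (p b) (p c) v"
    "rule c a b = Some v \<Longrightarrow> oriented_as (p a) (p b) (p c) v"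
    "rule c b a = Some v \<Longrightarrow> oriented_as (p a) (p b) (p c) (- v)"
    "rule b a c = Some v \<Longrightarrow> oriented_as (p a) (p b) (p c) (- v)"
    "rule a c b = Some v \<Longrightarrow> oriented_as (p a) (p b) (p c) (- v)" for v
    using sound oriented_as_perm by metis+
  then show "oriented_as (p a) (p b) (p c) (join_chi X1 chi1 u1 X2 chi2 u2 u3 a b c)"
    using covers[OF abc] unfolding join_chi_def Let_def rule_def[symmetric]
    by (auto split: option.split)
qed

lemma join_chi_root_first:
  assumes "u3 \<notin> X1 \<union> X2"
    and "join_rule X1 chi1 u1 X2 chi2 u2 (pred_root (insert u1 X1) chi1 u1) u3 b c u3 = Some v"
  shows "join_chi X1 chi1 u1 X2 chi2 u2 u3 u3 b c = v"
  using assms by (simp add: join_chi_def join_rule_def)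

lemma join_rule_at_succ_root:
  assumes "X1 \<inter> X2 = {x0}" "u3 \<notin> X1 \<union> X2" "s1 \<in> X1"
    and "\<forall>z\<in>X1 - {s1}. chi1 s1 z u1 = 1" "\<forall>z\<in>X2 - {x0}. chi2 x0 z u2 = 1"
    and "z \<in> X1 \<union> X2 - {s1}"
  shows "join_rule X1 chi1 u1 X2 chi2 u2 x0 u3 s1 z u3 = Some 1"
proof (cases "z \<in> X1")
  case True
  with assms show ?thesis
    by (simp add: join_rule_def)
next
  case False
  with assms(1,6) have "z \<in> X2 - {x0}"
    by auto
  with assms False show ?thesis
    by (cases "s1 = x0") (auto simp: join_rule_def)
qed

lemma finite_ex_slope:
  fixes f :: "'b \<Rightarrow> real \<times> real"
  assumes "finite S" "\<And>x. x \<in> S \<Longrightarrow> snd (f x) < 0"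
  obtains K where "\<And>x. x \<in> S \<Longrightarrow> 0 < fst (f x) - K * snd (f x)"
proof -
  have "eventually (\<lambda>K. 0 < fst (f x) - K * snd (f x)) at_top" if "x \<in> S" for x
    using eventually_gt_at_top[of "fst (f x) / snd (f x)"]
    by eventually_elim (use assms(2)[OF that] in \<open>simp add: neg_divide_less_eq\<close>)
  then have "eventually (\<lambda>K. \<forall>x\<in>S. 0 < fst (f x) - K * snd (f x)) at_top"
    using assms(1) by (intro eventually_ball_finite ballI)
  then show ?thesis
    using that by (auto simp: eventually_at_top_linorder)
qed

locale join_configuration =
  fixes X1 X2 :: "'a set" and chi1 chi2 :: "'a \<Rightarrow> 'a \<Rightarrow> 'a \<Rightarrow> int"
    and u1 u2 u3 x0 :: 'a and q1 q2 :: "'a \<Rightarrow> real \<times> real" and K :: real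
  assumes finite: "finite X1" "finite X2"
    and roots: "u1 \<notin> X1" "u2 \<notin> X2" "u3 \<notin> X1 \<union> X2"
    and inter: "X1 \<inter> X2 = {x0}"
    and q1: "realization (insert u1 X1) chi1 q1" "q1 u1 = 0" "q1 x0 = (1, 0)"
    and q2: "realization (insert u2 X2) chi2 q2" "q2 u2 = 0" "q2 x0 = (1, 0)"
    and below: "\<And>x. x \<in> X1 - {x0} \<Longrightarrow> snd (q1 x) < 0"
    and above: "\<And>z. z \<in> X2 - {x0} \<Longrightarrow> 0 < snd (q2 z)"
    and slope: "\<And>x. x \<in> X1 - {x0} \<Longrightarrow> 0 < fst (q1 x) - K * snd (q1 x)"
      \<comment> \<open>seen from the first picture, \<open>u3\<close> approaches the origin from direction \<open>(-K, -1)\<close>;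
        the slope condition puts \<open>X1 - {x0}\<close> to the left of that ray\<close>
begin

definition place :: "real \<Rightarrow> 'a \<Rightarrow> real \<times> real" where
  "place e x = (if x \<in> X1 then q1 x else if x \<in> X2 then collapsed K e (q2 x) else root_point K e)"

lemma place_X1: "x \<in> X1 \<Longrightarrow> place e x = q1 x"
  by (simp add: place_def)

lemma place_X2: "x \<in> X2 \<Longrightarrow> e \<noteq> 0 \<Longrightarrow> place e x = collapsed K e (q2 x)"
  using inter q1(3) q2(3) collapsed_fixpoint by (cases "x = x0") (auto simp: place_def)

lemma place_root: "place e u3 = root_point K e"
  using roots by (simp add: place_def)

lemma q2_upper: "z \<in> X2 \<Longrightarrow> 0 < snd (q2 z) \<or> q2 z = (1, 0)"
  using above q2(3) by blast

lemma oriented_q1: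
  "a \<in> insert u1 X1 \<Longrightarrow> b \<in> insert u1 X1 \<Longrightarrow> c \<in> insert u1 X1 \<Longrightarrow> distinct [a, b, c] \<Longrightarrow>
    oriented_as (q1 a) (q1 b) (q1 c) (chi1 a b c)"
  by (rule realizationD[OF q1(1)])

lemma oriented_q2:
  "a \<in> insert u2 X2 \<Longrightarrow> b \<in> insert u2 X2 \<Longrightarrow> c \<in> insert u2 X2 \<Longrightarrow> distinct [a, b, c] \<Longrightarrow>
    oriented_as (q2 a) (q2 b) (q2 c) (chi2 a b c)"
  by (rule realizationD[OF q2(1)])

lemma eventually_place_X2: "eventually (\<lambda>e. \<forall>x\<in>X2. place e x = collapsed K e (q2 x)) (at_right 0)"
  using eventually_at_right_less[of "0::real"] by eventually_elim (simp add: place_X2)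

lemma eventually_oriented_X1:
  "a \<in> X1 \<Longrightarrow> b \<in> X1 \<Longrightarrow> c \<in> X1 \<Longrightarrow> distinct [a, b, c] \<Longrightarrow>
    eventually (\<lambda>e. oriented_as (place e a) (place e b) (place e c) (chi1 a b c)) (at_right 0)"
  by (simp add: place_X1 oriented_q1)

lemma eventually_oriented_X2:
  assumes "a \<in> X2" "b \<in> X2" "c \<in> X2" "distinct [a, b, c]"
  shows "eventually (\<lambda>e. oriented_as (place e a) (place e b) (place e c) (chi2 a b c)) (at_right 0)"
proof -
  have o: "oriented_as (q2 a) (q2 b) (q2 c) (chi2 a b c)"
    using oriented_q2 assms by simp
  have "eventually (\<lambda>e. sgn (orient (collapsed K e (q2 a)) (collapsed K e (q2 b)) (collapsed K e (q2 c)))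
      = sgn (orient (q2 a) (q2 b) (q2 c))) (at_right 0)"
    using eventually_collapse_weight_pos[where K = K, OF q2_upper[OF assms(1)]]
      eventually_collapse_weight_pos[where K = K, OF q2_upper[OF assms(2)]]
      eventually_collapse_weight_pos[where K = K, OF q2_upper[OF assms(3)]]
      eventually_at_right_less[of "0::real"]
    by eventually_elim (simp add: sgn_orient_collapsed)
  from eventually_oriented_as_transfer[OF this o] eventually_place_X2 show ?thesis
    by eventually_elim (use assms in simp)
qed

lemma eventually_oriented_X1_X1_X2:
  assumes "a \<in> X1" "b \<in> X1" "c \<in> X2 - {x0}" "a \<noteq> b"
  shows "eventually (\<lambda>e. oriented_as (place e a) (place e b) (place e c) (chi1 a b u1)) (at_right 0)"
proof -
  have o: "oriented_as (q1 a) (q1 b) 0 (chi1 a b u1)"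
    using oriented_q1[of a b u1] assms roots q1(2) by auto
  then have "orient (q1 a) (q1 b) 0 \<noteq> 0"
    by (auto simp: oriented_as_iff)
  then have "eventually (\<lambda>e. sgn (orient (q1 a) (q1 b) (collapsed K e (q2 c))) = sgn (orient (q1 a) (q1 b) 0))
      (at_right 0)"
    using above[OF assms(3)] by (intro eventually_sgn_orient_collapsed)
  from eventually_oriented_as_transfer[OF this o] show ?thesis
    by eventually_elim (use assms inter in \<open>auto simp: place_def\<close>)
qed

lemma eventually_oriented_X1_X2_X2:
  assumes "a \<in> X1 - {x0}" "b \<in> X2" "c \<in> X2" "b \<noteq> c"
  shows "eventually (\<lambda>e. oriented_as (place e a) (place e b) (place e c) (chi2 u2 b c)) (at_right 0)"
proof -
  have o: "oriented_as 0 (q2 b) (q2 c) (chi2 u2 b c)"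
    using oriented_q2[of u2 b c] assms roots q2(2) by auto
  then have "orient 0 (q2 b) (q2 c) \<noteq> 0"
    by (auto simp: oriented_as_iff)
  then have "eventually (\<lambda>e. sgn (orient (q1 a) (collapsed K e (q2 b)) (collapsed K e (q2 c)))
      = sgn (orient 0 (q2 b) (q2 c))) (at_right 0)"
    using below[OF assms(1)] q2_upper assms(2,3) by (intro eventually_sgn_orient_two_collapsed)
  from eventually_oriented_as_transfer[OF this o] eventually_place_X2 show ?thesis
    by eventually_elim (use assms in \<open>simp add: place_X1\<close>)
qed

lemma eventually_oriented_X1_X1_root:
  assumes "a \<in> X1" "b \<in> X1" "a \<noteq> b"
  shows "eventually (\<lambda>e. oriented_as (place e a) (place e b) (place e u3) (chi1 a b u1)) (at_right 0)"
proof -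
  have o: "oriented_as (q1 a) (q1 b) 0 (chi1 a b u1)"
    using oriented_q1[of a b u1] assms roots q1(2) by auto
  then have "orient (q1 a) (q1 b) 0 \<noteq> 0"
    by (auto simp: oriented_as_iff)
  then have "eventually (\<lambda>e. sgn (orient (q1 a) (q1 b) (root_point K e)) = sgn (orient (q1 a) (q1 b) 0))
      (at_right 0)"
    by (rule eventually_sgn_orient_root)
  from eventually_oriented_as_transfer[OF this o] show ?thesis
    using assms by (simp add: place_X1 place_root)
qed

lemma eventually_oriented_X2_X2_root:
  assumes "a \<in> X2" "b \<in> X2" "a \<noteq> b"
  shows "eventually (\<lambda>e. oriented_as (place e a) (place e b) (place e u3) (chi2 a b u2)) (at_right 0)"
proof -
  have o: "oriented_as (q2 a) (q2 b) 0 (chi2 a b u2)"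
    using oriented_q2[of a b u2] assms roots q2(2) by auto
  then have "orient (q2 a) (q2 b) 0 \<noteq> 0"
    by (auto simp: oriented_as_iff)
  then have "eventually (\<lambda>e. sgn (orient (collapsed K e (q2 a)) (collapsed K e (q2 b)) (root_point K e))
      = sgn (orient (q2 a) (q2 b) 0)) (at_right 0)"
    using q2_upper assms(1,2) by (intro eventually_sgn_orient_collapsed_root)
  from eventually_oriented_as_transfer[OF this o] eventually_place_X2 show ?thesis
    by eventually_elim (use assms in \<open>simp add: place_root\<close>)
qed

lemma eventually_oriented_X1_X2_root:
  assumes "a \<in> X1 - {x0}" "b \<in> X2 - {x0}"
  shows "eventually (\<lambda>e. oriented_as (place e a) (place e b) (place e u3) 1) (at_right 0)"
proof -
  have "place e b = collapsed K e (q2 b)" for e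
    using assms(2) inter by (auto simp: place_def)
  from eventually_orient_collapsed_root_pos[OF slope[OF assms(1)] above[OF assms(2)]] show ?thesis
    by eventually_elim (use assms \<open>\<And>e. place e b = _\<close> in \<open>simp add: place_X1 place_root oriented_as_iff\<close>)
qed

lemma eventually_join_rules_oriented:
  "eventually (\<lambda>e. \<forall>a\<in>insert u3 (X1 \<union> X2). \<forall>b\<in>insert u3 (X1 \<union> X2). \<forall>c\<in>insert u3 (X1 \<union> X2).
     \<forall>v. distinct [a, b, c] \<longrightarrow> join_rule X1 chi1 u1 X2 chi2 u2 x0 u3 a b c = Some v \<longrightarrow>
       oriented_as (place e a) (place e b) (place e c) v) (at_right 0)"
proof -
  have rule: "eventually (\<lambda>e. oriented_as (place e a) (place e b) (place e c) v) (at_right 0)"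
    if "distinct [a, b, c]" "join_rule X1 chi1 u1 X2 chi2 u2 x0 u3 a b c = Some v" for a b c v
    using that roots unfolding join_rule_def
    by (auto split: if_splits intro: eventually_oriented_X1 eventually_oriented_X2
        eventually_oriented_X1_X1_X2 eventually_oriented_X1_X2_X2 eventually_oriented_X1_X1_root
        eventually_oriented_X2_X2_root eventually_oriented_X1_X2_root)
  have "eventually (\<lambda>e. \<forall>v. distinct [a, b, c] \<longrightarrow> join_rule X1 chi1 u1 X2 chi2 u2 x0 u3 a b c = Some v
      \<longrightarrow> oriented_as (place e a) (place e b) (place e c) v) (at_right 0)" for a b c
  proof (cases "distinct [a, b, c]"; cases "join_rule X1 chi1 u1 X2 chi2 u2 x0 u3 a b c")
    fix v assume "distinct [a, b, c]" "join_rule X1 chi1 u1 X2 chi2 u2 x0 u3 a b c = Some v"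
    from rule[OF this] show ?thesis
      by eventually_elim (simp add: \<open>join_rule X1 chi1 u1 X2 chi2 u2 x0 u3 a b c = Some v\<close>)
  qed auto
  moreover have "finite (insert u3 (X1 \<union> X2))"
    using finite by simp
  ultimately show ?thesis
    by (intro eventually_ball_finite ballI)
qed

end

lemma join_chi_realization:
  assumes R1: "rooted_realizable_chirotope X1 chi1 u1" and R2: "rooted_realizable_chirotope X2 chi2 u2"
    and "pred_root (insert u1 X1) chi1 u1 = succ_root (insert u2 X2) chi2 u2"
    and "X1 \<inter> X2 = {pred_root (insert u1 X1) chi1 u1}"
    and "u3 \<notin> X1 \<union> X2"
  shows "\<exists>p. realization (insert u3 (X1 \<union> X2)) (join_chi X1 chi1 u1 X2 chi2 u2 u3) p"
proof -
  define x0 where "x0 = pred_root (insert u1 X1) chi1 u1"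
  note D1 = rooted_realizable_chirotopeD[OF R1] and D2 = rooted_realizable_chirotopeD[OF R2]
  have x0: "x0 \<in> X1" "x0 \<in> X2" and inter: "X1 \<inter> X2 = {x0}"
    and pred1: "\<forall>z\<in>X1 - {x0}. chi1 x0 u1 z = 1" and succ2: "\<forall>z\<in>X2 - {x0}. chi2 u2 x0 z = 1"
    using pred_root_spec[OF R1] succ_root_spec[OF R2] assms(3,4) by (simp_all add: x0_def)
  obtain q1 where q1: "realization (insert u1 X1) chi1 q1" "q1 u1 = 0" "q1 x0 = (1, 0)"
    using rooted_realization_normalized[OF R1 x0(1)] .
  obtain q2 where q2: "realization (insert u2 X2) chi2 q2" "q2 u2 = 0" "q2 x0 = (1, 0)"
    using rooted_realization_normalized[OF R2 x0(2)] .
  have below: "snd (q1 x) < 0" if "x \<in> X1 - {x0}" for x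
    using that pred1 realization_eq_1_iff[OF q1(1), of x0 u1 x] x0 D1(1)
    by (auto simp: q1(2,3) orient_def)
  have above: "0 < snd (q2 z)" if "z \<in> X2 - {x0}" for z
    using that succ2 realization_eq_1_iff[OF q2(1), of u2 x0 z] x0 D2(1)
    by (auto simp: q2(2,3) orient_def)
  obtain K where "\<And>x. x \<in> X1 - {x0} \<Longrightarrow> 0 < fst (q1 x) - K * snd (q1 x)"
    using finite_ex_slope[of "X1 - {x0}" q1] D1(2) below by blast
  then interpret join_configuration X1 X2 chi1 chi2 u1 u2 u3 x0 q1 q2 K
    using D1(1,2) D2(1,2) assms(5) inter q1 q2 below above by unfold_locales auto
  obtain e where "\<forall>a\<in>insert u3 (X1 \<union> X2). \<forall>b\<in>insert u3 (X1 \<union> X2). \<forall>c\<in>insert u3 (X1 \<union> X2).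
     \<forall>v. distinct [a, b, c] \<longrightarrow> join_rule X1 chi1 u1 X2 chi2 u2 x0 u3 a b c = Some v \<longrightarrow>
       oriented_as (place e a) (place e b) (place e c) v"
    using eventually_happens'[OF trivial_limit_at_right_real eventually_join_rules_oriented] by blast
  then have "realization (insert u3 (X1 \<union> X2)) (join_chi X1 chi1 u1 X2 chi2 u2 u3) (place e)"
    using join_rule_covers[OF inter assms(5)] unfolding x0_def by (intro realization_join_chi) blast+
  then show ?thesis
    by blast
qed

lemma join_chi_root_extreme:
  assumes R1: "rooted_realizable_chirotope X1 chi1 u1" and R2: "rooted_realizable_chirotope X2 chi2 u2"
    and "pred_root (insert u1 X1) chi1 u1 = succ_root (insert u2 X2) chi2 u2"
    and "X1 \<inter> X2 = {pred_root (insert u1 X1) chi1 u1}"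
    and u3: "u3 \<notin> X1 \<union> X2"
  shows "extreme (insert u3 (X1 \<union> X2)) (join_chi X1 chi1 u1 X2 chi2 u2 u3) u3"
proof -
  define x0 where "x0 = pred_root (insert u1 X1) chi1 u1"
  define s1 where "s1 = succ_root (insert u1 X1) chi1 u1"
  note D1 = rooted_realizable_chirotopeD[OF R1] and D2 = rooted_realizable_chirotopeD[OF R2]
  have x0: "x0 \<in> X2" and inter: "X1 \<inter> X2 = {x0}"
    and s1: "s1 \<in> X1" "\<forall>z\<in>X1 - {s1}. chi1 u1 s1 z = 1"
    and succ2: "\<forall>z\<in>X2 - {x0}. chi2 u2 x0 z = 1"
    using succ_root_spec[OF R1] succ_root_spec[OF R2] assms(3,4) by (simp_all add: x0_def s1_def)
  have "\<forall>z\<in>X1 - {s1}. chi1 s1 z u1 = 1"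
  proof
    fix z assume "z \<in> X1 - {s1}"
    then show "chi1 s1 z u1 = 1"
      using s1 sign_function_perm(1)[OF D1(3), of u1 s1 z] D1(1) by auto
  qed
  moreover have "\<forall>z\<in>X2 - {x0}. chi2 x0 z u2 = 1"
  proof
    fix z assume "z \<in> X2 - {x0}"
    then show "chi2 x0 z u2 = 1"
      using succ2 x0 sign_function_perm(1)[OF D2(3), of u2 x0 z] D2(1) by auto
  qed
  ultimately have "join_chi X1 chi1 u1 X2 chi2 u2 u3 u3 s1 z = 1"
    if "z \<in> insert u3 (X1 \<union> X2) - {u3, s1}" for z
    using that u3 inter s1(1) unfolding x0_def
    by (intro join_chi_root_first join_rule_at_succ_root) auto
  then have "\<forall>z\<in>insert u3 (X1 \<union> X2) - {u3, s1}. \<forall>w\<in>insert u3 (X1 \<union> X2) - {u3, s1}.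
      join_chi X1 chi1 u1 X2 chi2 u2 u3 u3 s1 z = join_chi X1 chi1 u1 X2 chi2 u2 u3 u3 s1 w"
    by simp
  moreover have "s1 \<in> insert u3 (X1 \<union> X2)" "s1 \<noteq> u3"
    using s1(1) u3 by auto
  ultimately show ?thesis
    unfolding extreme_def by blast
qed

theorem proposition2p2:
  fixes X1 X2 :: "'a set"
    and chi1 chi2 :: "'a \<Rightarrow> 'a \<Rightarrow> 'a \<Rightarrow> int"
    and u1 u2 u3 :: 'a
  assumes "rooted_realizable_chirotope X1 chi1 u1"
    and "rooted_realizable_chirotope X2 chi2 u2"
    and "pred_root (insert u1 X1) chi1 u1 = succ_root (insert u2 X2) chi2 u2"
    and "X1 \<inter> X2 = {pred_root (insert u1 X1) chi1 u1}"
    and "u3 \<notin> X1 \<union> X2"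
  shows "rooted_realizable_chirotope (X1 \<union> X2) (join_chi X1 chi1 u1 X2 chi2 u2 u3) u3"
proof -
  obtain p where p: "realization (insert u3 (X1 \<union> X2)) (join_chi X1 chi1 u1 X2 chi2 u2 u3) p"
    using join_chi_realization[OF assms] by blast
  have "finite (insert u3 (X1 \<union> X2))"
    using rooted_realizable_chirotopeD(2)[OF assms(1)] rooted_realizable_chirotopeD(2)[OF assms(2)]
    by simp
  with p have "chirotope (insert u3 (X1 \<union> X2)) (join_chi X1 chi1 u1 X2 chi2 u2 u3)"
    "realizable (insert u3 (X1 \<union> X2)) (join_chi X1 chi1 u1 X2 chi2 u2 u3)"
    by (auto intro: realization_chirotope simp: realizable_iff_ex_realization realization_sign_function)
  with join_chi_root_extreme[OF assms] assms(5) show ?thesis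
    unfolding rooted_realizable_chirotope_def rooted_chirotope_def by simp
qed

end
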